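(* Let $\mathcal{B}$ be a real Banach space having a pre-dual space $\mathcal{B}_*$, let $\nu_j\in\mathcal{B}_*$, $j\in\mathbb{N}_m$, be linearly independent, and let $\mathbf{y}\in\mathbb{R}^m\setminus\{0\}$. For $\mathbf{c}\in\mathbb{R}^m$ put $\mathcal{L}^*(\mathbf{c}):=\sum_{j\in\mathbb{N}_m}c_j\nu_j$, and let (D) denote the problem $\inf\{\|\mathcal{L}^*(\mathbf{c})\|_{\mathcal{B}_*}:\langle\mathbf{c},\mathbf{y}\rangle_{\mathbb{R}^m}=1,\ \mathbf{c}\in\mathbb{R}^m\}$. Then: (a) if $\hat f$ is a solution of the minimum norm interpolation problem with data $\mathbf{y}$, there exists a solution $\hat{\mathbf{c}}$ of (D) such that $$\hat f\in\frac{1}{\|\mathcal{L}^*(\hat{\mathbf{c}})\|_{\mathcal{B}_*}}\partial\|\cdot\|_{\mathcal{B}_*}(\mathcal{L}^*(\hat{\mathbf{c}}))\cap\mathcal{M}_{\mathbf{y}};$$ (b) conversely, if $\hat{\mathbf{c}}$ is a solution of (D) and $\hat f\in\mathcal{B}$ belongs to the set displayed in (a), then $\hat f$ is a solution of the minimum norm interpolation problem with data $\mathbf{y}$.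
   Context: $\mathcal{B}$ is a real Banach space with dual $\mathcal{B}^*$ and pairing $\langle\nu,f\rangle_{\mathcal{B}}:=\nu(f)$; $\mathbb{N}_m:=\{1,\dots,m\}$; $\mathcal{L}(f):=[\langle\nu_j,f\rangle_{\mathcal{B}}:j\in\mathbb{N}_m]$, $\mathcal{M}_{\mathbf{y}}:=\{f\in\mathcal{B}:\mathcal{L}(f)=\mathbf{y}\}$; a solution of the minimum norm interpolation problem with data $\mathbf{y}$ is an $\hat f\in\mathcal{M}_{\mathbf{y}}$ with $\|\hat f\|_{\mathcal{B}}=\inf\{\|f\|_{\mathcal{B}}:f\in\mathcal{M}_{\mathbf{y}}\}$. A normed space $\mathcal{B}_*$ is a pre-dual of $\mathcal{B}$ if $(\mathcal{B}_* )^*=\mathcal{B}$, with $\langle\nu,f\rangle_{\mathcal{B}}=f(\nu)$ for $\nu\in\mathcal{B}_*$. For a convex $\phi$ on a real normed space $X$, $\partial\phi(x):=\{\mu\in X^*:\phi(z)-\phi(x)\ge\mu(z-x)\ \forall z\in X\}$. *)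

theory Defs
  imports "HOL-Analysis.Analysis"
begin

(* The Banach space B with pre-dual 'p is modelled as the dual of 'p, i.e. the
  space of bounded linear functionals 'p \<Rightarrow>\<^sub>L real; the pairing of
  \<nu> in the pre-dual with f in B is  blinfun_apply f \<nu>.*)

definition subdiff :: "('p::real_normed_vector \<Rightarrow> real) \<Rightarrow> 'p \<Rightarrow> ('p \<Rightarrow>\<^sub>L real) set" where
  "subdiff \<phi> x = {\<mu>. \<forall>z. \<phi> z - \<phi> x \<ge> blinfun_apply \<mu> (z - x)}"

definition interp_set :: "nat \<Rightarrow> (nat \<Rightarrow> 'p::real_normed_vector) \<Rightarrow> (nat \<Rightarrow> real) \<Rightarrow> ('p \<Rightarrow>\<^sub>L real) set" where
  "interp_set m \<nu> y = {f. \<forall>j\<in>{1..m}. blinfun_apply f (\<nu> j) = y j}"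

definition is_mni_solution :: "nat \<Rightarrow> (nat \<Rightarrow> 'p::real_normed_vector) \<Rightarrow> (nat \<Rightarrow> real) \<Rightarrow> ('p \<Rightarrow>\<^sub>L real) \<Rightarrow> bool" where
  "is_mni_solution m \<nu> y f \<longleftrightarrow> f \<in> interp_set m \<nu> y \<and> norm f = Inf (norm ` interp_set m \<nu> y)"

definition adjL :: "nat \<Rightarrow> (nat \<Rightarrow> 'p::real_normed_vector) \<Rightarrow> (nat \<Rightarrow> real) \<Rightarrow> 'p" where
  "adjL m \<nu> c = (\<Sum>j\<in>{1..m}. c j *\<^sub>R \<nu> j)"

definition is_dual_solution :: "nat \<Rightarrow> (nat \<Rightarrow> 'p::real_normed_vector) \<Rightarrow> (nat \<Rightarrow> real) \<Rightarrow> (nat \<Rightarrow> real) \<Rightarrow> bool" where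
  "is_dual_solution m \<nu> y c \<longleftrightarrow>
     (\<Sum>j\<in>{1..m}. c j * y j) = 1 \<and>
     norm (adjL m \<nu> c) = Inf {norm (adjL m \<nu> c') | c'. (\<Sum>j\<in>{1..m}. c' j * y j) = 1}"

end

theory Submission
  imports Defs
begin

text \<open>Weak duality: for \<open>f \<in> \<M>\<^sub>y\<close> and \<open>\<langle>c, y\<rangle> = 1\<close> we have \<open>1 = f(L\<^sup>*c) \<le> \<parallel>f\<parallel> \<parallel>L\<^sup>*c\<parallel>\<close>.
  Hahn--Banach makes this sharp: for a dual solution \<open>\<hat>c\<close> the functional \<open>L\<^sup>*a \<mapsto> \<langle>a, y\<rangle>\<close> on the range
  of \<open>L\<^sup>*\<close> has norm at most \<open>1 / \<parallel>L\<^sup>*\<hat>c\<parallel>\<close>, and its norm-preserving extension is an interpolant. So the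
  minimal norm is \<open>1 / \<parallel>L\<^sup>*\<hat>c\<parallel>\<close>, and \<open>f \<in> \<M>\<^sub>y\<close> attains it iff \<open>\<parallel>L\<^sup>*\<hat>c\<parallel> f\<close> has norm at most \<open>1\<close> and
  value \<open>\<parallel>L\<^sup>*\<hat>c\<parallel>\<close> at \<open>L\<^sup>*\<hat>c\<close>, i.e.\ is a subgradient of the norm there. A dual solution exists because
  linear independence makes \<open>c \<mapsto> \<parallel>L\<^sup>*c\<parallel>\<close> coercive on the finite-dimensional coefficient space.\<close>

text \<open>Partial extensions are represented by their graphs, so that Zorn's lemma applies to inclusion.\<close>

definition dominated_extension_graph ::
  "real \<Rightarrow> 'a::real_normed_vector set \<Rightarrow> ('a \<Rightarrow> real) \<Rightarrow> ('a \<times> real) set \<Rightarrow> bool" where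
  "dominated_extension_graph N V \<phi> G \<longleftrightarrow>
     (\<forall>x a b. (x, a) \<in> G \<longrightarrow> (x, b) \<in> G \<longrightarrow> a = b) \<and> (0, 0) \<in> G \<and>
     (\<forall>x a y b. (x, a) \<in> G \<longrightarrow> (y, b) \<in> G \<longrightarrow> (x + y, a + b) \<in> G) \<and>
     (\<forall>x a r. (x, a) \<in> G \<longrightarrow> (r *\<^sub>R x, r * a) \<in> G) \<and>
     (\<forall>x a. (x, a) \<in> G \<longrightarrow> a \<le> N * norm x) \<and> (\<forall>x\<in>V. (x, \<phi> x) \<in> G)"

lemma dominated_extension_graphD:
  assumes "dominated_extension_graph N V \<phi> G"
  shows "\<And>x a b. (x, a) \<in> G \<Longrightarrow> (x, b) \<in> G \<Longrightarrow> a = b"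
    and "(0, 0) \<in> G"
    and "\<And>x a y b. (x, a) \<in> G \<Longrightarrow> (y, b) \<in> G \<Longrightarrow> (x + y, a + b) \<in> G"
    and "\<And>x a r. (x, a) \<in> G \<Longrightarrow> (r *\<^sub>R x, r * a) \<in> G"
    and "\<And>x a. (x, a) \<in> G \<Longrightarrow> a \<le> N * norm x"
    and "\<And>x. x \<in> V \<Longrightarrow> (x, \<phi> x) \<in> G"
  using assms unfolding dominated_extension_graph_def by blast+

text \<open>The admissible values \<open>\<xi>\<close> at a new point \<open>x0\<close>: by sublinearity of \<open>N \<parallel>\<cdot>\<parallel>\<close> every lower bound is below
  every upper bound.\<close>

lemma dominated_extension_value:
  assumes G: "dominated_extension_graph N V \<phi> G" and N: "N \<ge> 0"
  obtains \<xi> where "\<And>u a. (u, a) \<in> G \<Longrightarrow> a - N * norm (u - x0) \<le> \<xi>"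
    and "\<And>v b. (v, b) \<in> G \<Longrightarrow> \<xi> \<le> N * norm (v + x0) - b"
proof -
  note add = dominated_extension_graphD(3)[OF G]
    and bound = dominated_extension_graphD(5)[OF G]
  define S where "S = {a - N * norm (u - x0) | u a. (u, a) \<in> G}"
  have below: "a - N * norm (u - x0) \<le> N * norm (v + x0) - b" if "(u, a) \<in> G" "(v, b) \<in> G" for u a v b
  proof -
    have "a + b \<le> N * norm (u + v)" using bound[OF add[OF that]] .
    also have "\<dots> \<le> N * (norm (u - x0) + norm (v + x0))"
      using N norm_triangle_ineq[of "u - x0" "v + x0"] by (simp add: mult_left_mono)
    finally show ?thesis by (simp add: algebra_simps)
  qed
  have "S \<noteq> {}" using dominated_extension_graphD(2)[OF G] unfolding S_def by blast
  moreover have "bdd_above S"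
    unfolding S_def bdd_above_def using below[OF _ dominated_extension_graphD(2)[OF G]] by blast
  ultimately show ?thesis
    by (intro that[of "Sup S"] cSup_upper cSup_least) (use below S_def in blast)+
qed

lemma dominated_extension_bound:
  assumes G: "dominated_extension_graph N V \<phi> G"
    and lo: "\<And>u a. (u, a) \<in> G \<Longrightarrow> a - N * norm (u - x0) \<le> \<xi>"
    and hi: "\<And>v b. (v, b) \<in> G \<Longrightarrow> \<xi> \<le> N * norm (v + x0) - b"
    and ua: "(u, a) \<in> G"
  shows "a + t * \<xi> \<le> N * norm (u + t *\<^sub>R x0)"
proof (cases t "0::real" rule: linorder_cases)
  case equal
  thus ?thesis using dominated_extension_graphD(5)[OF G ua] by simp
next
  case greater
  have "\<xi> \<le> N * norm (inverse t *\<^sub>R u + x0) - inverse t * a"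
    using hi[OF dominated_extension_graphD(4)[OF G ua]] .
  hence "t * \<xi> \<le> t * (N * norm (inverse t *\<^sub>R u + x0) - inverse t * a)"
    using greater by (simp add: mult_left_mono)
  also have "\<dots> = N * (t * norm (inverse t *\<^sub>R u + x0)) - a"
    using greater by (simp add: algebra_simps)
  also have "t * norm (inverse t *\<^sub>R u + x0) = norm (t *\<^sub>R (inverse t *\<^sub>R u + x0))"
    using greater by simp
  also have "t *\<^sub>R (inverse t *\<^sub>R u + x0) = u + t *\<^sub>R x0"
    using greater by (simp add: algebra_simps)
  finally show ?thesis by simp
next
  case less
  define s where "s = - t"
  have s: "s > 0" using less s_def by simp
  have "inverse s * a - N * norm (inverse s *\<^sub>R u - x0) \<le> \<xi>"
    using lo[OF dominated_extension_graphD(4)[OF G ua]] .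
  hence "s * (inverse s * a - N * norm (inverse s *\<^sub>R u - x0)) \<le> s * \<xi>"
    using s by (simp add: mult_left_mono)
  hence "a - N * (s * norm (inverse s *\<^sub>R u - x0)) \<le> s * \<xi>"
    using s by (simp add: algebra_simps)
  also have "s * norm (inverse s *\<^sub>R u - x0) = norm (s *\<^sub>R (inverse s *\<^sub>R u - x0))"
    using s by simp
  also have "s *\<^sub>R (inverse s *\<^sub>R u - x0) = u + t *\<^sub>R x0"
    using s s_def by (simp add: algebra_simps)
  finally show ?thesis using s_def by simp
qed

lemma dominated_extension_graph_initial:
  fixes V :: "'a::real_normed_vector set"
  assumes V: "subspace V"
    and add: "\<And>x y. x \<in> V \<Longrightarrow> y \<in> V \<Longrightarrow> \<phi> (x + y) = \<phi> x + \<phi> y"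
    and scale: "\<And>x r. x \<in> V \<Longrightarrow> \<phi> (r *\<^sub>R x) = r * \<phi> x"
    and bound: "\<And>x. x \<in> V \<Longrightarrow> \<phi> x \<le> N * norm x"
  shows "dominated_extension_graph N V \<phi> ((\<lambda>x. (x, \<phi> x)) ` V)"
  unfolding dominated_extension_graph_def
proof (intro conjI allI impI ballI)
  show "(0, 0) \<in> (\<lambda>x. (x, \<phi> x)) ` V"
    using subspace_0[OF V] scale[of 0 0] by (auto intro!: image_eqI[of _ _ 0])
next
  fix x a y b assume "(x, a) \<in> (\<lambda>x. (x, \<phi> x)) ` V" "(y, b) \<in> (\<lambda>x. (x, \<phi> x)) ` V"
  thus "(x + y, a + b) \<in> (\<lambda>x. (x, \<phi> x)) ` V" using add subspace_add[OF V] by auto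
next
  fix x a r assume "(x, a) \<in> (\<lambda>x. (x, \<phi> x)) ` V"
  thus "(r *\<^sub>R x, r * a) \<in> (\<lambda>x. (x, \<phi> x)) ` V" using scale subspace_scale[OF V] by auto
qed (use bound in auto)

definition graph_extension :: "('a::real_vector \<times> real) set \<Rightarrow> 'a \<Rightarrow> real \<Rightarrow> ('a \<times> real) set" where
  "graph_extension G x0 \<xi> = {(u + t *\<^sub>R x0, a + t * \<xi>) | u a t. (u, a) \<in> G}"

lemma graph_extension_functional:
  assumes G: "dominated_extension_graph N V \<phi> G" and x0: "x0 \<notin> fst ` G"
    and "(x, a) \<in> graph_extension G x0 \<xi>" and "(x, b) \<in> graph_extension G x0 \<xi>"
  shows "a = b"
proof -
  note graph = dominated_extension_graphD[OF G]
  obtain u1 a1 t1 u2 a2 t2 where h: "(u1, a1) \<in> G" "(u2, a2) \<in> G" "x = u1 + t1 *\<^sub>R x0"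
    "a = a1 + t1 * \<xi>" "x = u2 + t2 *\<^sub>R x0" "b = a2 + t2 * \<xi>"
    using assms(3,4) unfolding graph_extension_def by blast
  have diff: "(u2 + (-1) *\<^sub>R u1, a2 + (-1) * a1) \<in> G" using graph(3)[OF h(2) graph(4)[OF h(1)]] .
  have "t1 = t2"
  proof (rule ccontr)
    assume "t1 \<noteq> t2"
    moreover have "u2 + (-1) *\<^sub>R u1 = (t1 - t2) *\<^sub>R x0" using h(3,5) by (simp add: algebra_simps)
    ultimately have "inverse (t1 - t2) *\<^sub>R (u2 + (-1) *\<^sub>R u1) = x0" by simp
    thus False using graph(4)[OF diff] x0 by force
  qed
  thus "a = b" using h graph(1) by auto
qed

lemma dominated_extension_graph_extend:
  fixes G :: "('a::real_normed_vector \<times> real) set"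
  assumes G: "dominated_extension_graph N V \<phi> G" and N: "N \<ge> 0" and x0: "x0 \<notin> fst ` G"
  shows "\<exists>G'. dominated_extension_graph N V \<phi> G' \<and> G \<subset> G'"
proof -
  note graph = dominated_extension_graphD[OF G]
  obtain \<xi> where lo: "\<And>u a. (u, a) \<in> G \<Longrightarrow> a - N * norm (u - x0) \<le> \<xi>"
    and hi: "\<And>v b. (v, b) \<in> G \<Longrightarrow> \<xi> \<le> N * norm (v + x0) - b"
    using dominated_extension_value[OF G N] by blast
  define G' where "G' = graph_extension G x0 \<xi>"
  have "G \<subseteq> G'"
  proof
    fix p assume "p \<in> G"
    moreover have "p = (fst p + 0 *\<^sub>R x0, snd p + 0 * \<xi>)" by simp
    ultimately show "p \<in> G'" unfolding G'_def graph_extension_def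
      by (metis (mono_tags, lifting) mem_Collect_eq prod.collapse)
  qed
  moreover have "(x0, \<xi>) = (0 + 1 *\<^sub>R x0, 0 + 1 * \<xi>)" by simp
  hence "(x0, \<xi>) \<in> G'" unfolding G'_def graph_extension_def using graph(2) by blast
  ultimately have "G \<subset> G'" using x0 by force
  moreover have "dominated_extension_graph N V \<phi> G'"
    unfolding dominated_extension_graph_def
  proof (intro conjI allI impI ballI)
    fix x a b assume "(x, a) \<in> G'" "(x, b) \<in> G'"
    thus "a = b" using graph_extension_functional[OF G x0] unfolding G'_def by blast
  next
    show "(0, 0) \<in> G'" using \<open>G \<subset> G'\<close> graph(2) by blast
  next
    fix x a y b assume "(x, a) \<in> G'" "(y, b) \<in> G'"
    then obtain u1 a1 t1 u2 a2 t2 where h: "(u1, a1) \<in> G" "(u2, a2) \<in> G" "x = u1 + t1 *\<^sub>R x0"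
      "a = a1 + t1 * \<xi>" "y = u2 + t2 *\<^sub>R x0" "b = a2 + t2 * \<xi>"
      unfolding G'_def graph_extension_def by blast
    have "x + y = (u1 + u2) + (t1 + t2) *\<^sub>R x0" "a + b = (a1 + a2) + (t1 + t2) * \<xi>"
      using h by (simp_all add: algebra_simps)
    thus "(x + y, a + b) \<in> G'" unfolding G'_def graph_extension_def using graph(3)[OF h(1,2)] by blast
  next
    fix x a r assume "(x, a) \<in> G'"
    then obtain u a1 t where h: "(u, a1) \<in> G" "x = u + t *\<^sub>R x0" "a = a1 + t * \<xi>"
      unfolding G'_def graph_extension_def by blast
    have "r *\<^sub>R x = r *\<^sub>R u + (r * t) *\<^sub>R x0" "r * a = r * a1 + (r * t) * \<xi>"
      using h by (simp_all add: algebra_simps)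
    thus "(r *\<^sub>R x, r * a) \<in> G'" unfolding G'_def graph_extension_def using graph(4)[OF h(1)] by blast
  next
    fix x a assume "(x, a) \<in> G'"
    then obtain u a1 t where "(u, a1) \<in> G" "x = u + t *\<^sub>R x0" "a = a1 + t * \<xi>"
      unfolding G'_def graph_extension_def by blast
    thus "a \<le> N * norm x" using dominated_extension_bound[OF G lo hi] by blast
  next
    fix x assume "x \<in> V" thus "(x, \<phi> x) \<in> G'" using graph(6) \<open>G \<subset> G'\<close> by blast
  qed
  ultimately show ?thesis by blast
qed

lemma dominated_extension_graph_Union_chain:
  assumes C: "C \<in> chains {G. dominated_extension_graph N V \<phi> G}" and "C \<noteq> {}"
  shows "dominated_extension_graph N V \<phi> (\<Union>C)"
proof -
  have graph: "dominated_extension_graph N V \<phi> X" if "X \<in> C" for X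
    using chainsD2[OF C] that by blast
  have common: "\<exists>Z\<in>C. X \<subseteq> Z \<and> Y \<subseteq> Z" if "X \<in> C" "Y \<in> C" for X Y
    using chainsD[OF C that] that by blast
  obtain X0 where "X0 \<in> C" using \<open>C \<noteq> {}\<close> by blast
  show ?thesis
    unfolding dominated_extension_graph_def
  proof (intro conjI allI impI ballI)
    fix x a b assume "(x, a) \<in> \<Union>C" "(x, b) \<in> \<Union>C"
    then obtain Z where "Z \<in> C" "(x, a) \<in> Z" "(x, b) \<in> Z" using common by blast
    thus "a = b" using dominated_extension_graphD(1)[OF graph] by blast
  next
    fix x a y b assume "(x, a) \<in> \<Union>C" "(y, b) \<in> \<Union>C"
    then obtain Z where "Z \<in> C" "(x, a) \<in> Z" "(y, b) \<in> Z" using common by blast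
    thus "(x + y, a + b) \<in> \<Union>C" using dominated_extension_graphD(3)[OF graph] by blast
  next
    show "(0, 0) \<in> \<Union>C" using \<open>X0 \<in> C\<close> dominated_extension_graphD(2)[OF graph] by blast
  next
    fix x a r assume "(x, a) \<in> \<Union>C"
    then obtain X where "X \<in> C" "(x, a) \<in> X" by blast
    thus "(r *\<^sub>R x, r * a) \<in> \<Union>C" using dominated_extension_graphD(4)[OF graph] by blast
  next
    fix x a assume "(x, a) \<in> \<Union>C"
    then obtain X where "X \<in> C" "(x, a) \<in> X" by blast
    thus "a \<le> N * norm x" using dominated_extension_graphD(5)[OF graph] by blast
  next
    fix x assume "x \<in> V"
    thus "(x, \<phi> x) \<in> \<Union>C" using \<open>X0 \<in> C\<close> dominated_extension_graphD(6)[OF graph] by blast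
  qed
qed

lemma dominated_extension_graph_total:
  fixes V :: "'a::real_normed_vector set"
  assumes N: "N \<ge> 0" and V: "subspace V"
    and add: "\<And>x y. x \<in> V \<Longrightarrow> y \<in> V \<Longrightarrow> \<phi> (x + y) = \<phi> x + \<phi> y"
    and scale: "\<And>x r. x \<in> V \<Longrightarrow> \<phi> (r *\<^sub>R x) = r * \<phi> x"
    and bound: "\<And>x. x \<in> V \<Longrightarrow> \<phi> x \<le> N * norm x"
  obtains G where "dominated_extension_graph N V \<phi> G" and "fst ` G = UNIV"
proof -
  define A where "A = {G. dominated_extension_graph N V \<phi> G}"
  have initial: "(\<lambda>x. (x, \<phi> x)) ` V \<in> A"
    unfolding A_def using dominated_extension_graph_initial[OF V add scale bound] by blast
  have "\<forall>C\<in>chains A. \<exists>U\<in>A. \<forall>X\<in>C. X \<subseteq> U"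
  proof
    fix C assume C: "C \<in> chains A"
    show "\<exists>U\<in>A. \<forall>X\<in>C. X \<subseteq> U"
    proof (cases "C = {}")
      case True thus ?thesis using initial by blast
    next
      case False
      have "\<Union>C \<in> A"
        using dominated_extension_graph_Union_chain[OF C[unfolded A_def] False] unfolding A_def ..
      thus ?thesis by blast
    qed
  qed
  from Zorn_Lemma2[OF this] obtain M where M: "M \<in> A" and max: "\<forall>X\<in>A. M \<subseteq> X \<longrightarrow> X = M"
    by blast
  have graph: "dominated_extension_graph N V \<phi> M" using M unfolding A_def ..
  have "x \<in> fst ` M" for x
  proof (rule ccontr)
    assume "x \<notin> fst ` M"
    then obtain X where "dominated_extension_graph N V \<phi> X" "M \<subset> X"
      using dominated_extension_graph_extend[OF graph N] by blast
    thus False using max unfolding A_def by blast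
  qed
  hence "fst ` M = UNIV" by blast
  with graph show ?thesis by (rule that)
qed

lemma hahn_banach_norm:
  fixes V :: "'a::real_normed_vector set"
  assumes N: "N \<ge> 0" and V: "subspace V"
    and add: "\<And>x y. x \<in> V \<Longrightarrow> y \<in> V \<Longrightarrow> \<phi> (x + y) = \<phi> x + \<phi> y"
    and scale: "\<And>x r. x \<in> V \<Longrightarrow> \<phi> (r *\<^sub>R x) = r * \<phi> x"
    and bound: "\<And>x. x \<in> V \<Longrightarrow> \<phi> x \<le> N * norm x"
  shows "\<exists>g. (\<forall>x\<in>V. blinfun_apply g x = \<phi> x) \<and> norm g \<le> N"
proof -
  obtain G where G: "dominated_extension_graph N V \<phi> G" and total: "fst ` G = UNIV"
    using dominated_extension_graph_total[OF assms] .
  note graph = dominated_extension_graphD[OF G]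
  define h where "h x = (THE a. (x, a) \<in> G)" for x
  have h_eq: "h x = a" if "(x, a) \<in> G" for x a
    unfolding h_def using that graph(1) by blast
  have h_graph: "(x, h x) \<in> G" for x
    using total h_eq by (metis UNIV_I fst_conv imageE prod.collapse)
  have lin: "linear h"
    by (rule linearI) (auto intro!: h_eq graph(3,4) h_graph)
  have h_bound: "\<bar>h x\<bar> \<le> N * norm x" for x
    using graph(5)[OF h_graph, of x] graph(5)[OF h_graph, of "- x"] linear_neg[OF lin, of x] by simp
  have "bounded_linear h"
    using lin h_bound by (intro bounded_linear_intro[of _ N]) (auto simp: linear_add linear_scale mult.commute)
  hence "blinfun_apply (Blinfun h) = h" by (rule bounded_linear_Blinfun_apply)
  moreover have "norm (Blinfun h) \<le> N"
    using N h_bound calculation by (intro norm_blinfun_bound) auto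
  ultimately show ?thesis using graph(6) h_eq by metis
qed

lemma is_mni_solution_iff:
  "is_mni_solution m \<nu> y f \<longleftrightarrow>
     f \<in> interp_set m \<nu> y \<and> (\<forall>g\<in>interp_set m \<nu> y. norm f \<le> norm g)"
proof
  assume "is_mni_solution m \<nu> y f"
  thus "f \<in> interp_set m \<nu> y \<and> (\<forall>g\<in>interp_set m \<nu> y. norm f \<le> norm g)"
    unfolding is_mni_solution_def by (auto intro!: cInf_lower bdd_belowI[of _ 0])
next
  assume "f \<in> interp_set m \<nu> y \<and> (\<forall>g\<in>interp_set m \<nu> y. norm f \<le> norm g)"
  thus "is_mni_solution m \<nu> y f"
    unfolding is_mni_solution_def by (auto intro!: cInf_eq_minimum[symmetric])
qed

lemma is_dual_solution_iff:
  "is_dual_solution m \<nu> y c \<longleftrightarrow>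
     (\<Sum>j\<in>{1..m}. c j * y j) = 1 \<and>
     (\<forall>c'. (\<Sum>j\<in>{1..m}. c' j * y j) = 1 \<longrightarrow> norm (adjL m \<nu> c) \<le> norm (adjL m \<nu> c'))"
proof
  assume "is_dual_solution m \<nu> y c"
  thus "(\<Sum>j\<in>{1..m}. c j * y j) = 1 \<and>
     (\<forall>c'. (\<Sum>j\<in>{1..m}. c' j * y j) = 1 \<longrightarrow> norm (adjL m \<nu> c) \<le> norm (adjL m \<nu> c'))"
    unfolding is_dual_solution_def by (auto intro!: cInf_lower bdd_belowI[of _ 0])
next
  assume "(\<Sum>j\<in>{1..m}. c j * y j) = 1 \<and>
     (\<forall>c'. (\<Sum>j\<in>{1..m}. c' j * y j) = 1 \<longrightarrow> norm (adjL m \<nu> c) \<le> norm (adjL m \<nu> c'))"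
  thus "is_dual_solution m \<nu> y c"
    unfolding is_dual_solution_def by (auto intro!: cInf_eq_minimum[symmetric])
qed

lemma subdiff_norm_iff:
  "\<mu> \<in> subdiff norm x \<longleftrightarrow> norm \<mu> \<le> 1 \<and> blinfun_apply \<mu> x = norm x"
proof
  assume \<mu>: "\<mu> \<in> subdiff norm x"
  have le_norm: "blinfun_apply \<mu> v \<le> norm v" for v
  proof -
    have "blinfun_apply \<mu> ((x + v) - x) \<le> norm (x + v) - norm x"
      using \<mu> unfolding subdiff_def by blast
    thus ?thesis using norm_triangle_ineq[of x v] by simp
  qed
  have "norm \<mu> \<le> 1"
    using le_norm[of "- _"] le_norm by (intro norm_blinfun_bound) (auto simp: blinfun.minus_right abs_le_iff)
  moreover have "norm x \<le> blinfun_apply \<mu> x"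
    using \<mu> unfolding subdiff_def by (auto simp: blinfun.minus_right dest: spec[of _ 0])
  ultimately show "norm \<mu> \<le> 1 \<and> blinfun_apply \<mu> x = norm x"
    using le_norm[of x] by simp
next
  assume "norm \<mu> \<le> 1 \<and> blinfun_apply \<mu> x = norm x"
  moreover have "blinfun_apply \<mu> z \<le> norm z" if "norm \<mu> \<le> 1" for z
  proof -
    have "blinfun_apply \<mu> z \<le> norm \<mu> * norm z" using norm_blinfun[of \<mu> z] by simp
    also have "\<dots> \<le> norm z" using that mult_right_mono[of "norm \<mu>" 1 "norm z"] by simp
    finally show ?thesis .
  qed
  ultimately show "\<mu> \<in> subdiff norm x"
    unfolding subdiff_def by (simp add: blinfun.diff_right)
qed

lemma adjL_add: "adjL m \<nu> (\<lambda>j. a j + b j) = adjL m \<nu> a + adjL m \<nu> b"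
  unfolding adjL_def by (simp add: scaleR_add_left sum.distrib)

lemma adjL_scale: "adjL m \<nu> (\<lambda>j. r * a j) = r *\<^sub>R adjL m \<nu> a"
  unfolding adjL_def by (simp add: scaleR_sum_right)

lemma adjL_cong: "(\<And>j. j \<in> {1..m} \<Longrightarrow> a j = b j) \<Longrightarrow> adjL m \<nu> a = adjL m \<nu> b"
  unfolding adjL_def by (rule sum.cong) auto

lemma adjL_unit:
  assumes "k \<in> {1..m}"
  shows "adjL m \<nu> (\<lambda>j. if j = k then 1 else 0) = \<nu> k"
proof -
  have "adjL m \<nu> (\<lambda>j. if j = k then 1 else 0) = (\<Sum>j\<in>{1..m}. if j = k then \<nu> j else 0)"
    unfolding adjL_def by (rule sum.cong) auto
  thus ?thesis using assms by simp
qed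

lemma interp_set_iff_adjL:
  "f \<in> interp_set m \<nu> y \<longleftrightarrow> (\<forall>c. blinfun_apply f (adjL m \<nu> c) = (\<Sum>j\<in>{1..m}. c j * y j))"
proof
  assume "f \<in> interp_set m \<nu> y"
  thus "\<forall>c. blinfun_apply f (adjL m \<nu> c) = (\<Sum>j\<in>{1..m}. c j * y j)"
    unfolding adjL_def interp_set_def by (simp add: blinfun.sum_right blinfun.scaleR_right)
next
  assume f: "\<forall>c. blinfun_apply f (adjL m \<nu> c) = (\<Sum>j\<in>{1..m}. c j * y j)"
  show "f \<in> interp_set m \<nu> y"
    unfolding interp_set_def
  proof (intro CollectI ballI)
    fix k assume "k \<in> {1..m}"
    have "(\<Sum>j\<in>{1..m}. (if j = k then 1 else 0) * y j) = (\<Sum>j\<in>{1..m}. if j = k then y j else 0)"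
      by (rule sum.cong) auto
    thus "blinfun_apply f (\<nu> k) = y k"
      using f adjL_unit[OF \<open>k \<in> {1..m}\<close>, of \<nu>] \<open>k \<in> {1..m}\<close> by (metis sum.delta finite_atLeastAtMost)
  qed
qed

lemma adjL_eq_imp_eq_on:
  assumes lin_indep: "\<And>c. (\<Sum>j\<in>{1..m}. c j *\<^sub>R \<nu> j) = 0 \<Longrightarrow> \<forall>j\<in>{1..m}. c j = 0"
    and "adjL m \<nu> a = adjL m \<nu> b"
  shows "\<forall>j\<in>{1..m}. a j = b j"
proof -
  have "adjL m \<nu> (\<lambda>j. a j + (-1) * b j) = 0"
    using assms(2) by (simp only: adjL_add adjL_scale) simp
  thus ?thesis using lin_indep unfolding adjL_def by fastforce
qed

lemma norm_adjL_pos: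
  assumes lin_indep: "\<And>c. (\<Sum>j\<in>{1..m}. c j *\<^sub>R \<nu> j) = 0 \<Longrightarrow> \<forall>j\<in>{1..m}. c j = 0"
    and "(\<Sum>j\<in>{1..m}. c j * y j) = 1"
  shows "norm (adjL m \<nu> c) > 0"
proof (rule ccontr)
  assume "\<not> norm (adjL m \<nu> c) > 0"
  hence "\<forall>j\<in>{1..m}. c j = 0" using lin_indep unfolding adjL_def by simp
  thus False using assms(2) by simp
qed

lemma norm_interp_mult_norm_adjL_ge_one:
  assumes "f \<in> interp_set m \<nu> y" and "(\<Sum>j\<in>{1..m}. c j * y j) = 1"
  shows "1 \<le> norm f * norm (adjL m \<nu> c)"
proof -
  have "1 = blinfun_apply f (adjL m \<nu> c)" using assms by (simp add: interp_set_iff_adjL)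
  also have "\<dots> \<le> norm f * norm (adjL m \<nu> c)"
    using norm_blinfun[of f "adjL m \<nu> c"] by simp
  finally show ?thesis .
qed

lemma subspace_range_adjL: "subspace (range (adjL m \<nu>))"
  unfolding subspace_def
proof (intro conjI ballI allI)
  show "0 \<in> range (adjL m \<nu>)" by (rule range_eqI[of _ _ "\<lambda>_. 0"]) (simp add: adjL_def)
next
  fix x z assume "x \<in> range (adjL m \<nu>)" "z \<in> range (adjL m \<nu>)"
  then obtain a b where "x = adjL m \<nu> a" "z = adjL m \<nu> b" by blast
  thus "x + z \<in> range (adjL m \<nu>)" using adjL_add[of m \<nu> a b] by (metis rangeI)
next
  fix r x assume "x \<in> range (adjL m \<nu>)"
  then obtain a where "x = adjL m \<nu> a" by blast
  thus "r *\<^sub>R x \<in> range (adjL m \<nu>)" using adjL_scale[of m \<nu> r a] by (metis rangeI)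
qed

lemma exists_interp_norm_mult_norm_adjL_le_one:
  assumes lin_indep: "\<And>c. (\<Sum>j\<in>{1..m}. c j *\<^sub>R \<nu> j) = 0 \<Longrightarrow> \<forall>j\<in>{1..m}. c j = 0"
    and dual: "is_dual_solution m \<nu> y c"
  shows "\<exists>g\<in>interp_set m \<nu> y. norm g * norm (adjL m \<nu> c) \<le> 1"
proof -
  have cy: "(\<Sum>j\<in>{1..m}. c j * y j) = 1"
    and min: "\<And>c'. (\<Sum>j\<in>{1..m}. c' j * y j) = 1 \<Longrightarrow> norm (adjL m \<nu> c) \<le> norm (adjL m \<nu> c')"
    using dual unfolding is_dual_solution_iff by blast+
  define d where "d = norm (adjL m \<nu> c)"
  have d: "d > 0" unfolding d_def using norm_adjL_pos[OF lin_indep cy] .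
  define \<phi> where "\<phi> v = (\<Sum>j\<in>{1..m}. (SOME a. adjL m \<nu> a = v) j * y j)" for v
  have \<phi>_adjL: "\<phi> (adjL m \<nu> a) = (\<Sum>j\<in>{1..m}. a j * y j)" for a
  proof -
    have "adjL m \<nu> (SOME a'. adjL m \<nu> a' = adjL m \<nu> a) = adjL m \<nu> a" by (rule someI[of _ a]) (rule refl)
    hence "\<forall>j\<in>{1..m}. (SOME a'. adjL m \<nu> a' = adjL m \<nu> a) j = a j"
      using adjL_eq_imp_eq_on[OF lin_indep] by blast
    thus ?thesis unfolding \<phi>_def by (intro sum.cong) auto
  qed
  have \<phi>_add: "\<phi> (x + z) = \<phi> x + \<phi> z" if xz: "x \<in> range (adjL m \<nu>)" "z \<in> range (adjL m \<nu>)" for x z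
  proof -
    obtain a b where "x = adjL m \<nu> a" "z = adjL m \<nu> b" using xz by blast
    thus ?thesis using \<phi>_adjL[of "\<lambda>j. a j + b j"]
      by (simp add: adjL_add \<phi>_adjL sum.distrib distrib_right)
  qed
  have \<phi>_scale: "\<phi> (r *\<^sub>R x) = r * \<phi> x" if x: "x \<in> range (adjL m \<nu>)" for x r
  proof -
    obtain a where "x = adjL m \<nu> a" using x by blast
    thus ?thesis using \<phi>_adjL[of "\<lambda>j. r * a j"]
      by (simp add: adjL_scale \<phi>_adjL sum_distrib_left mult.assoc)
  qed
  have \<phi>_bound: "\<phi> x \<le> 1 / d * norm x" if "x \<in> range (adjL m \<nu>)" for x
  proof -
    obtain a where x: "x = adjL m \<nu> a" using \<open>x \<in> range (adjL m \<nu>)\<close> by blast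
    define s where "s = (\<Sum>j\<in>{1..m}. a j * y j)"
    show ?thesis
    proof (cases "s > 0")
      case False
      have "0 \<le> 1 / d * norm x" using d by simp
      thus ?thesis using False x \<phi>_adjL s_def by simp
    next
      case True
      have "(\<Sum>j\<in>{1..m}. (1 / s * a j) * y j) = 1 / s * s"
        unfolding s_def sum_distrib_left by (simp add: mult.assoc)
      hence "(\<Sum>j\<in>{1..m}. (1 / s * a j) * y j) = 1" using True by simp
      hence "d \<le> norm (adjL m \<nu> (\<lambda>j. 1 / s * a j))" unfolding d_def by (rule min)
      also have "\<dots> = norm x / s" using True unfolding x adjL_scale by simp
      finally show ?thesis using True d x \<phi>_adjL s_def by (simp add: field_simps)
    qed
  qed
  have "0 \<le> 1 / d" using d by simp
  from hahn_banach_norm[OF this subspace_range_adjL[of m \<nu>] \<phi>_add \<phi>_scale \<phi>_bound]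
  obtain g where g: "\<forall>x\<in>range (adjL m \<nu>). blinfun_apply g x = \<phi> x" and ng: "norm g \<le> 1 / d"
    by blast
  have "g \<in> interp_set m \<nu> y" unfolding interp_set_iff_adjL using g \<phi>_adjL by simp
  moreover have "norm g * d \<le> 1" using ng d by (simp add: field_simps)
  ultimately show ?thesis unfolding d_def by blast
qed

lemma continuous_on_norm_adjL: "continuous_on S (\<lambda>c. norm (adjL m \<nu> c))"
  unfolding adjL_def
  by (intro continuous_on_norm continuous_on_sum continuous_on_scaleR continuous_on_const
      continuous_on_subset[OF continuous_on_product_coordinates]) simp_all

text \<open>Coefficient vectors are functions on all of \<open>\<nat>\<close>; vanishing off \<open>{1..m}\<close> makes an \<open>\<ell>\<^sup>1\<close>-ball compact in the
  product topology.\<close>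

lemma compact_supported_l1_ball:
  "compact {c :: nat \<Rightarrow> real. (\<forall>j. j \<notin> {1..m} \<longrightarrow> c j = 0) \<and> (\<Sum>j\<in>{1..m}. \<bar>c j\<bar>) \<le> R}"
proof -
  define B where "B = PiE UNIV (\<lambda>j::nat. if j \<in> {1..m} then {-R..R} else {0::real})"
  have "compactin (product_topology (\<lambda>_. euclidean) UNIV) B"
    unfolding B_def by (subst compactin_PiE) auto
  hence "compact B" by (simp add: euclidean_product_topology)
  moreover have "closed {c :: nat \<Rightarrow> real. (\<Sum>j\<in>{1..m}. \<bar>c j\<bar>) \<le> R}"
    by (intro closed_Collect_le continuous_on_sum continuous_on_rabs continuous_on_const
        continuous_on_subset[OF continuous_on_product_coordinates]) simp_all
  ultimately have "compact (B \<inter> {c. (\<Sum>j\<in>{1..m}. \<bar>c j\<bar>) \<le> R})" by (rule compact_Int_closed)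
  moreover have "\<bar>c j\<bar> \<le> R" if "(\<Sum>j\<in>{1..m}. \<bar>c j\<bar>) \<le> R" "j \<in> {1..m}" for c :: "nat \<Rightarrow> real" and j
    using member_le_sum[of j "{1..m}" "\<lambda>j. \<bar>c j\<bar>"] that by simp
  hence "B \<inter> {c. (\<Sum>j\<in>{1..m}. \<bar>c j\<bar>) \<le> R} =
      {c. (\<forall>j. j \<notin> {1..m} \<longrightarrow> c j = 0) \<and> (\<Sum>j\<in>{1..m}. \<bar>c j\<bar>) \<le> R}"
    unfolding B_def by (fastforce simp: PiE_iff abs_le_iff split: if_splits)
  ultimately show ?thesis by simp
qed

lemma adjL_coercive:
  assumes lin_indep: "\<And>c. (\<Sum>j\<in>{1..m}. c j *\<^sub>R \<nu> j) = 0 \<Longrightarrow> \<forall>j\<in>{1..m}. c j = 0"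
  shows "\<exists>\<alpha>>0. \<forall>c. \<alpha> * (\<Sum>j\<in>{1..m}. \<bar>c j\<bar>) \<le> norm (adjL m \<nu> c)"
proof (cases "m = 0")
  case True
  thus ?thesis by (intro exI[of _ 1]) simp
next
  case False
  define S where "S = {c :: nat \<Rightarrow> real. (\<forall>j. j \<notin> {1..m} \<longrightarrow> c j = 0) \<and> (\<Sum>j\<in>{1..m}. \<bar>c j\<bar>) \<le> 1}
    \<inter> {c. (\<Sum>j\<in>{1..m}. \<bar>c j\<bar>) = 1}"
  have "closed {c :: nat \<Rightarrow> real. (\<Sum>j\<in>{1..m}. \<bar>c j\<bar>) = 1}"
    by (intro closed_Collect_eq continuous_on_sum continuous_on_rabs continuous_on_const
        continuous_on_subset[OF continuous_on_product_coordinates]) simp_all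
  hence "compact S" unfolding S_def by (intro compact_Int_closed compact_supported_l1_ball)
  moreover have "(\<lambda>j. if j = 1 then 1 else 0) \<in> S"
    using False unfolding S_def by (simp add: if_distrib cong: if_cong)
  hence "S \<noteq> {}" by blast
  ultimately obtain c1 where c1: "c1 \<in> S"
    and min: "\<And>c. c \<in> S \<Longrightarrow> norm (adjL m \<nu> c1) \<le> norm (adjL m \<nu> c)"
    using continuous_attains_inf[OF _ _ continuous_on_norm_adjL] by metis
  have "norm (adjL m \<nu> c1) > 0"
  proof (rule ccontr)
    assume "\<not> norm (adjL m \<nu> c1) > 0"
    hence "\<forall>j\<in>{1..m}. c1 j = 0" using lin_indep unfolding adjL_def by simp
    thus False using c1 unfolding S_def by simp
  qed
  moreover have "norm (adjL m \<nu> c1) * (\<Sum>j\<in>{1..m}. \<bar>c j\<bar>) \<le> norm (adjL m \<nu> c)" for c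
  proof (cases "(\<Sum>j\<in>{1..m}. \<bar>c j\<bar>) = 0")
    case False
    define s where "s = (\<Sum>j\<in>{1..m}. \<bar>c j\<bar>)"
    have s: "s > 0" using False unfolding s_def by (simp add: sum_nonneg order_le_neq_trans)
    define c' where "c' = (\<lambda>j. if j \<in> {1..m} then c j / s else 0)"
    have "(\<Sum>j\<in>{1..m}. \<bar>c' j\<bar>) = (\<Sum>j\<in>{1..m}. \<bar>c j\<bar>) / s"
      unfolding c'_def sum_divide_distrib using s by (intro sum.cong) auto
    hence "c' \<in> S" using s unfolding S_def s_def by (simp add: c'_def)
    hence "norm (adjL m \<nu> c1) \<le> norm (adjL m \<nu> c')" by (rule min)
    also have "adjL m \<nu> c' = (1 / s) *\<^sub>R adjL m \<nu> c"
      unfolding adjL_scale[symmetric] by (rule adjL_cong) (simp add: c'_def)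
    finally show ?thesis using s by (simp add: s_def field_simps)
  qed simp
  ultimately show ?thesis by blast
qed

text \<open>By coercivity it suffices to minimise over the part of the hyperplane \<open>\<langle>c, y\<rangle> = 1\<close> in the
  \<open>\<ell>\<^sup>1\<close>-ball of radius \<open>\<parallel>L\<^sup>*c\<^sub>0\<parallel> / \<alpha>\<close>, which is compact.\<close>

lemma dual_solution_exists:
  assumes lin_indep: "\<And>c. (\<Sum>j\<in>{1..m}. c j *\<^sub>R \<nu> j) = 0 \<Longrightarrow> \<forall>j\<in>{1..m}. c j = 0"
    and y_nonzero: "\<exists>j\<in>{1..m}. y j \<noteq> 0"
  shows "\<exists>c. is_dual_solution m \<nu> y c"
proof -
  obtain \<alpha> where \<alpha>: "\<alpha> > 0" and coercive: "\<And>c. \<alpha> * (\<Sum>j\<in>{1..m}. \<bar>c j\<bar>) \<le> norm (adjL m \<nu> c)"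
    using adjL_coercive[OF lin_indep] by blast
  obtain k where k: "k \<in> {1..m}" "y k \<noteq> 0" using y_nonzero by blast
  define c0 where "c0 = (\<lambda>j. if j = k then 1 / y k else 0)"
  have c0_feasible: "(\<Sum>j\<in>{1..m}. c0 j * y j) = 1"
  proof -
    have "(\<Sum>j\<in>{1..m}. c0 j * y j) = (\<Sum>j\<in>{1..m}. if j = k then 1 else 0)"
      by (rule sum.cong) (auto simp: c0_def k)
    thus ?thesis using k by simp
  qed
  define R where "R = norm (adjL m \<nu> c0) / \<alpha>"
  define Q where "Q = {c :: nat \<Rightarrow> real. (\<forall>j. j \<notin> {1..m} \<longrightarrow> c j = 0) \<and> (\<Sum>j\<in>{1..m}. \<bar>c j\<bar>) \<le> R}
    \<inter> {c. (\<Sum>j\<in>{1..m}. c j * y j) = 1}"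
  have "closed {c :: nat \<Rightarrow> real. (\<Sum>j\<in>{1..m}. c j * y j) = 1}"
    by (intro closed_Collect_eq continuous_on_sum continuous_on_mult continuous_on_const
        continuous_on_subset[OF continuous_on_product_coordinates]) simp_all
  hence "compact Q" unfolding Q_def by (intro compact_Int_closed compact_supported_l1_ball)
  moreover have "c0 \<in> Q"
    using coercive[of c0] \<alpha> c0_feasible k(1)
    unfolding Q_def R_def by (auto simp: c0_def field_simps)
  ultimately obtain c where c: "c \<in> Q"
    and min: "\<And>c'. c' \<in> Q \<Longrightarrow> norm (adjL m \<nu> c) \<le> norm (adjL m \<nu> c')"
    using continuous_attains_inf[OF _ _ continuous_on_norm_adjL] by (metis empty_iff)
  have "norm (adjL m \<nu> c) \<le> norm (adjL m \<nu> c')" if c': "(\<Sum>j\<in>{1..m}. c' j * y j) = 1" for c'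
  proof (cases "(\<Sum>j\<in>{1..m}. \<bar>c' j\<bar>) \<le> R")
    case True
    define c'' where "c'' = (\<lambda>j. if j \<in> {1..m} then c' j else 0)"
    have "adjL m \<nu> c'' = adjL m \<nu> c'" by (rule adjL_cong) (simp add: c''_def)
    moreover have "(\<Sum>j\<in>{1..m}. \<bar>c'' j\<bar>) = (\<Sum>j\<in>{1..m}. \<bar>c' j\<bar>)"
      and "(\<Sum>j\<in>{1..m}. c'' j * y j) = (\<Sum>j\<in>{1..m}. c' j * y j)"
      unfolding c''_def by (auto intro: sum.cong)
    hence "c'' \<in> Q" using True c' unfolding Q_def by (simp add: c''_def)
    ultimately show ?thesis using min by metis
  next
    case False
    have "norm (adjL m \<nu> c) \<le> norm (adjL m \<nu> c0)" using min \<open>c0 \<in> Q\<close> .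
    also have "\<dots> = \<alpha> * R" unfolding R_def using \<alpha> by simp
    also have "\<dots> \<le> \<alpha> * (\<Sum>j\<in>{1..m}. \<bar>c' j\<bar>)" using False \<alpha> by simp
    also have "\<dots> \<le> norm (adjL m \<nu> c')" by (rule coercive)
    finally show ?thesis .
  qed
  moreover have "(\<Sum>j\<in>{1..m}. c j * y j) = 1" using c unfolding Q_def by blast
  ultimately show ?thesis unfolding is_dual_solution_iff by blast
qed

lemma mni_solution_if_scaled_subgradient:
  assumes lin_indep: "\<And>c. (\<Sum>j\<in>{1..m}. c j *\<^sub>R \<nu> j) = 0 \<Longrightarrow> \<forall>j\<in>{1..m}. c j = 0"
    and cy: "(\<Sum>j\<in>{1..m}. c j * y j) = 1"
    and f: "f \<in> ((\<lambda>\<mu>. (1 / norm (adjL m \<nu> c)) *\<^sub>R \<mu>) ` subdiff norm (adjL m \<nu> c)) \<inter> interp_set m \<nu> y"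
  shows "is_mni_solution m \<nu> y f"
proof -
  define d where "d = norm (adjL m \<nu> c)"
  have d: "d > 0" unfolding d_def using norm_adjL_pos[OF lin_indep cy] .
  obtain \<mu> where "\<mu> \<in> subdiff norm (adjL m \<nu> c)" and "f = (1 / d) *\<^sub>R \<mu>"
    using f unfolding d_def by blast
  hence f_le: "norm f \<le> 1 / d" using d by (simp add: subdiff_norm_iff divide_right_mono)
  have "norm f \<le> norm g" if "g \<in> interp_set m \<nu> y" for g
  proof -
    have "1 / d \<le> norm g"
      using norm_interp_mult_norm_adjL_ge_one[OF that cy] d unfolding d_def by (simp add: divide_le_eq)
    thus ?thesis using f_le by linarith
  qed
  moreover have "f \<in> interp_set m \<nu> y" using f by blast
  ultimately show ?thesis unfolding is_mni_solution_iff by blast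
qed

lemma scaled_subgradient_if_mni_solution:
  assumes lin_indep: "\<And>c. (\<Sum>j\<in>{1..m}. c j *\<^sub>R \<nu> j) = 0 \<Longrightarrow> \<forall>j\<in>{1..m}. c j = 0"
    and mni: "is_mni_solution m \<nu> y f" and dual: "is_dual_solution m \<nu> y c"
  shows "f \<in> ((\<lambda>\<mu>. (1 / norm (adjL m \<nu> c)) *\<^sub>R \<mu>) ` subdiff norm (adjL m \<nu> c)) \<inter> interp_set m \<nu> y"
proof -
  have f: "f \<in> interp_set m \<nu> y" and min: "\<And>g. g \<in> interp_set m \<nu> y \<Longrightarrow> norm f \<le> norm g"
    using mni unfolding is_mni_solution_iff by blast+
  have cy: "(\<Sum>j\<in>{1..m}. c j * y j) = 1" using dual unfolding is_dual_solution_def by blast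
  define d where "d = norm (adjL m \<nu> c)"
  have d: "d > 0" unfolding d_def using norm_adjL_pos[OF lin_indep cy] .
  obtain g where g: "g \<in> interp_set m \<nu> y" and "norm g * d \<le> 1"
    using exists_interp_norm_mult_norm_adjL_le_one[OF lin_indep dual] unfolding d_def by blast
  have "norm (d *\<^sub>R f) = norm f * d" using d by simp
  also have "\<dots> \<le> norm g * d" using min[OF g] d by (simp add: mult_right_mono)
  finally have "norm (d *\<^sub>R f) \<le> 1" using \<open>norm g * d \<le> 1\<close> by linarith
  moreover have "blinfun_apply (d *\<^sub>R f) (adjL m \<nu> c) = d"
    using f cy by (simp add: interp_set_iff_adjL blinfun.scaleR_left)
  ultimately have "d *\<^sub>R f \<in> subdiff norm (adjL m \<nu> c)" unfolding subdiff_norm_iff d_def by simp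
  moreover have "f = (1 / d) *\<^sub>R (d *\<^sub>R f)" using d by simp
  ultimately show ?thesis using f unfolding d_def by blast
qed

theorem mainTheorem11:
  fixes m :: nat and \<nu> :: "nat \<Rightarrow> 'p::real_normed_vector" and y :: "nat \<Rightarrow> real"
  assumes lin_indep: "\<And>c. (\<Sum>j\<in>{1..m}. c j *\<^sub>R \<nu> j) = 0 \<Longrightarrow> \<forall>j\<in>{1..m}. c j = 0"
    and y_nonzero: "\<exists>j\<in>{1..m}. y j \<noteq> 0"
  shows "(\<forall>f. is_mni_solution m \<nu> y f \<longrightarrow>
            (\<exists>c. is_dual_solution m \<nu> y c \<and>
                 f \<in> ((\<lambda>\<mu>. (1 / norm (adjL m \<nu> c)) *\<^sub>R \<mu>) ` subdiff norm (adjL m \<nu> c))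
                      \<inter> interp_set m \<nu> y))
       \<and> (\<forall>c f. is_dual_solution m \<nu> y c \<longrightarrow>
            f \<in> ((\<lambda>\<mu>. (1 / norm (adjL m \<nu> c)) *\<^sub>R \<mu>) ` subdiff norm (adjL m \<nu> c))
                 \<inter> interp_set m \<nu> y \<longrightarrow>
            is_mni_solution m \<nu> y f)"
proof (intro conjI allI impI)
  fix f assume "is_mni_solution m \<nu> y f"
  moreover obtain c where "is_dual_solution m \<nu> y c"
    using dual_solution_exists[OF lin_indep y_nonzero] by blast
  ultimately show "\<exists>c. is_dual_solution m \<nu> y c \<and>
      f \<in> ((\<lambda>\<mu>. (1 / norm (adjL m \<nu> c)) *\<^sub>R \<mu>) ` subdiff norm (adjL m \<nu> c)) \<inter> interp_set m \<nu> y"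
    using scaled_subgradient_if_mni_solution[OF lin_indep] by blast
next
  fix c f assume "is_dual_solution m \<nu> y c"
    and "f \<in> ((\<lambda>\<mu>. (1 / norm (adjL m \<nu> c)) *\<^sub>R \<mu>) ` subdiff norm (adjL m \<nu> c)) \<inter> interp_set m \<nu> y"
  thus "is_mni_solution m \<nu> y f"
    using mni_solution_if_scaled_subgradient[OF lin_indep] unfolding is_dual_solution_def by blast
qed

end
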